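(* A subset $S\subseteq N^{\mathbb N}$ is a safety constraint if and only if there exists $P\in\Omega$ (a prefix-free subset of $N^+$) such that $S=C_\omega(P)$, where $\omega$ is the final detector.
   Context: Fix a finite nonempty set $N$; $N^+$ is the set of nonempty finite words, $N^{\mathbb N}$ the set of streams; $s[0{:}m]$ is the prefix of length $m$, $s[m{:}]$ the suffix $k\mapsto s(k+m)$; for a set $A$ of words, $n^{-1}\cdot A=\{u:nu\in A\}$; a set of words is prefix-free if no proper prefix (including the empty word) of a member is a member. A safety constraint is a set $S\subseteq N^{\mathbb N}$ such that any $s$ with "for every $m$ there is $s'\in S$ with $s'[0{:}m]=s[0{:}m]$" belongs to $S$. Let $\mathbf 1=\{\Downarrow\}$. A detector is a set $|a|$ with $a:|a|\to(\mathbf 1+|a|)^N$. The final detector $\omega$ has carrier $\Omega$, the set of prefix-free subsets of $N^+$, with $\omega(P)(n)=\Downarrow$ if $n\in P$ and $n^{-1}\cdot P$ otherwise. For $s\in N^{\mathbb N}$, $\mathrm{Join}([s],a)$ maps $(t,y)\in\{s[k{:}]\}\times|a|$ to $\Downarrow$ if $a(y)(t(0))=\Downarrow$, else to $(t[1{:}],a(y)(t(0)))$; iterates $g^{(1)}=g$, $g^{(k+1)}(z)=\Downarrow$ if $g^{(k)}(z)=\Downarrow$, else $g(g^{(k)}(z))$. $C_a(x)=\{s\in N^{\mathbb N}:\mathrm{Join}([s],a)^{(k)}(s,x)\neq\Downarrow\ \forall k\ge1\}$. *)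

theory Defs
  imports Main
begin

text \<open>Streams over N are functions nat => 'n; words are lists. The terminal value
  (Downarrow) of 1 + X is represented by None, and x in X by Some x.\<close>

definition safety :: "(nat \<Rightarrow> 'n) set \<Rightarrow> bool" where
  "safety S \<longleftrightarrow> (\<forall>s. (\<forall>m. \<exists>s'\<in>S. \<forall>i<m. s' i = s i) \<longrightarrow> s \<in> S)"

definition prefix_free :: "'n list set \<Rightarrow> bool" where
  "prefix_free A \<longleftrightarrow> (\<forall>w\<in>A. \<forall>k<length w. take k w \<notin> A)"

definition Omega :: "'n list set set" where
  "Omega = {P. P \<subseteq> {w. w \<noteq> []} \<and> prefix_free P}"

definition lquot :: "'n \<Rightarrow> 'n list set \<Rightarrow> 'n list set" where
  "lquot n A = {u. n # u \<in> A}"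

definition omega :: "'n list set \<Rightarrow> 'n \<Rightarrow> 'n list set option" where
  "omega P n = (if [n] \<in> P then None else Some (lquot n P))"

definition Join :: "('x \<Rightarrow> 'n \<Rightarrow> 'x option) \<Rightarrow> (nat \<Rightarrow> 'n) \<times> 'x \<Rightarrow> ((nat \<Rightarrow> 'n) \<times> 'x) option" where
  "Join a z = (case a (snd z) (fst z 0) of None \<Rightarrow> None
                | Some y' \<Rightarrow> Some (\<lambda>k. fst z (Suc k), y'))"

primrec iter :: "('z \<Rightarrow> 'z option) \<Rightarrow> nat \<Rightarrow> 'z \<Rightarrow> 'z option" where
  "iter g 0 z = Some z"
| "iter g (Suc k) z = (case iter g k z of None \<Rightarrow> None | Some z' \<Rightarrow> g z')"

definition C :: "('x \<Rightarrow> 'n \<Rightarrow> 'x option) \<Rightarrow> 'x \<Rightarrow> (nat \<Rightarrow> 'n) set" where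
  "C a x = {s. \<forall>k\<ge>1. iter (Join a) k (s, x) \<noteq> None}"

end

theory Submission
  imports Defs "HOL-Library.Omega_Words_Fun"
begin

text \<open>Running the final detector from a state P along a stream s keeps the residual
  language of P after the prefix read so far, and halts exactly when a nonempty prefix of s
  lies in P; so C omega P consists of the streams with no nonempty prefix in P, and such a
  set of streams is closed under agreement on all prefixes. Conversely, for a safety
  constraint S call a word bad if it is a prefix of no stream in S. A stream outside S has a
  bad prefix, and the shortest nonempty bad prefixes form a prefix-free set P with
  S = C omega P.\<close>

lemma prefix_eq_iff: "prefix m s' = prefix m s \<longleftrightarrow> (\<forall>i<m. s' i = s i)"
  by (simp add: subsequence_def list_eq_iff_nth_eq)

lemma take_prefix: "k \<le> j \<Longrightarrow> take k (prefix j s) = prefix k s"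
  by (simp add: min_def)

(* Qualified because Omega_Words_Fun also defines an iter. *)
lemma iter_Join_omega:
  "Defs.iter (Join omega) k (s, P) =
    (if \<exists>j\<in>{1..k}. prefix j s \<in> P then None
     else Some (suffix k s, {u. prefix k s @ u \<in> P}))"
proof (induction k)
  case 0
  then show ?case by (simp add: subsequence_def)
next
  case (Suc k)
  show ?case
  proof (cases "\<exists>j\<in>{1..k}. prefix j s \<in> P")
    case True
    then have "\<exists>j\<in>{1..Suc k}. prefix j s \<in> P" by force
    then show ?thesis using Suc True by simp
  next
    case False
    then have first_hit: "(\<exists>j\<in>{1..Suc k}. prefix j s \<in> P) \<longleftrightarrow> prefix (Suc k) s \<in> P"
      by (simp add: atLeastAtMostSuc_conv del: subseq_to_Suc)
    have iter_k: "Defs.iter (Join omega) k (s, P) = Some (suffix k s, {u. prefix k s @ u \<in> P})"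
      using Suc False by simp
    show ?thesis
      unfolding iter.simps(2) iter_k first_hit
      by (simp add: Join_def omega_def lquot_def suffix_def)
  qed
qed

lemma C_omega: "C omega P = {s. \<forall>j\<ge>1. prefix j s \<notin> P}"
proof -
  have "Defs.iter (Join omega) k (s, P) \<noteq> None \<longleftrightarrow> (\<forall>j. 1 \<le> j \<and> j \<le> k \<longrightarrow> prefix j s \<notin> P)"
    for k s
    by (simp add: iter_Join_omega Bex_def)
  then show ?thesis
    unfolding C_def by blast
qed

lemma safety_prefix_avoiding: "safety {s. \<forall>j\<ge>1. prefix j s \<notin> A}"
  unfolding safety_def
proof (intro allI impI CollectI)
  fix s and j :: nat
  assume "\<forall>m. \<exists>s'\<in>{s. \<forall>j\<ge>1. prefix j s \<notin> A}. \<forall>i<m. s' i = s i" and "1 \<le> j"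
  then obtain s' where "prefix j s' \<notin> A" and "prefix j s' = prefix j s"
    unfolding prefix_eq_iff by blast
  then show "prefix j s \<notin> A"
    by simp
qed

definition bad_prefixes :: "(nat \<Rightarrow> 'n) set \<Rightarrow> 'n list set" where
  "bad_prefixes S = {w. \<forall>s\<in>S. prefix (length w) s \<noteq> w}"

definition minimal_bad_prefixes :: "(nat \<Rightarrow> 'n) set \<Rightarrow> 'n list set" where
  "minimal_bad_prefixes S =
    {w \<in> bad_prefixes S. w \<noteq> [] \<and> (\<forall>k. 1 \<le> k \<and> k < length w \<longrightarrow> take k w \<notin> bad_prefixes S)}"

lemma minimal_bad_prefixes_Omega: "minimal_bad_prefixes S \<in> Omega"
  unfolding Omega_def prefix_free_def minimal_bad_prefixes_def
  by (auto simp: Suc_le_eq)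

lemma bad_prefix_mono:
  assumes "prefix k s \<in> bad_prefixes S" and "k \<le> j"
  shows "prefix j s \<in> bad_prefixes S"
  using assms unfolding bad_prefixes_def by (auto simp: prefix_eq_iff dest: less_le_trans)

lemma safety_has_bad_prefix:
  assumes "safety S" and "s \<notin> S"
  shows "\<exists>m. prefix m s \<in> bad_prefixes S"
proof -
  from assms obtain m where "\<not> (\<exists>s'\<in>S. \<forall>i<m. s' i = s i)"
    unfolding safety_def by blast
  then have "prefix m s \<in> bad_prefixes S"
    by (auto simp: bad_prefixes_def prefix_eq_iff)
  then show ?thesis ..
qed

lemma bad_prefix_imp_minimal:
  assumes "prefix m s \<in> bad_prefixes S"
  shows "\<exists>j\<ge>1. prefix j s \<in> minimal_bad_prefixes S"
proof -
  let ?bad = "\<lambda>j. 1 \<le> j \<and> prefix j s \<in> bad_prefixes S"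
  have "?bad (max m 1)"
    using bad_prefix_mono[OF assms, of "max m 1"] by simp
  then have least: "?bad (Least ?bad)"
    by (rule LeastI)
  have "prefix k s \<notin> bad_prefixes S" if "1 \<le> k" "k < Least ?bad" for k
    using not_less_Least[OF that(2)] that(1) by blast
  with least have "prefix (Least ?bad) s \<in> minimal_bad_prefixes S"
    by (auto simp: minimal_bad_prefixes_def take_prefix)
  with least show ?thesis by blast
qed

lemma safety_eq_C_omega:
  assumes "safety S"
  shows "S = C omega (minimal_bad_prefixes S)"
proof
  show "S \<subseteq> C omega (minimal_bad_prefixes S)"
    by (auto simp: C_omega minimal_bad_prefixes_def bad_prefixes_def)
  show "C omega (minimal_bad_prefixes S) \<subseteq> S"
  proof
    fix s
    assume "s \<in> C omega (minimal_bad_prefixes S)"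
    then have "\<forall>j\<ge>1. prefix j s \<notin> minimal_bad_prefixes S"
      by (simp add: C_omega)
    then show "s \<in> S"
      using safety_has_bad_prefix[OF assms, of s] bad_prefix_imp_minimal by blast
  qed
qed

theorem mainTheorem13:
  fixes S :: "(nat \<Rightarrow> 'n::finite) set"
  shows "safety S \<longleftrightarrow> (\<exists>P\<in>Omega. S = C omega P)"
proof
  assume "safety S"
  then show "\<exists>P\<in>Omega. S = C omega P"
    using safety_eq_C_omega minimal_bad_prefixes_Omega by blast
next
  assume "\<exists>P\<in>Omega. S = C omega P"
  then show "safety S"
    using safety_prefix_avoiding by (auto simp: C_omega)
qed

end
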